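(* Let $S$ be a ring, let $n>1$ be an integer and let $R,B_1,\ldots,B_n$ be subrings of $S$. Assume that every $B_i$ is integrally closed in $S$ except at most two of them. If $R\subseteq B_1\cup\cdots\cup B_n$, then $R\subseteq B_i$ for some $i\in\{1,\ldots,n\}$.
   Context: All rings are commutative with identity; subrings share the identity of $S$. A subring $B$ of $S$ is integrally closed in $S$ if every element of $S$ integral over $B$ lies in $B$. *)

theory Defs
  imports "HOL-Computational_Algebra.Polynomial"
begin

definition subring :: "'a::comm_ring_1 set \<Rightarrow> bool" where
  "subring A \<longleftrightarrow> 0 \<in> A \<and> 1 \<in> A \<and>
     (\<forall>x\<in>A. \<forall>y\<in>A. x + y \<in> A \<and> x - y \<in> A \<and> x * y \<in> A)"

definition integral_over :: "'a::comm_ring_1 set \<Rightarrow> 'a \<Rightarrow> bool" where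
  "integral_over B s \<longleftrightarrow>
     (\<exists>p :: 'a poly. lead_coeff p = 1 \<and> (\<forall>i. coeff p i \<in> B) \<and> poly p s = 0)"

definition integrally_closed :: "'a::comm_ring_1 set \<Rightarrow> bool" where
  "integrally_closed B \<longleftrightarrow> (\<forall>s. integral_over B s \<longrightarrow> s \<in> B)"

end

theory Submission
  imports Defs
begin

text \<open>
  Write \<open>D\<^sub>1, D\<^sub>2\<close> for the (at most two) rings that may fail to be integrally closed.
  Let \<open>x \<in> R\<close> avoid \<open>D\<^sub>2\<close> and all the integrally closed \<open>B\<^sub>i\<close>, and suppose some
  \<open>y \<in> R\<close> avoids \<open>D\<^sub>1\<close>. Then \<open>x \<in> D\<^sub>1\<close>, so for every \<open>k \<ge> 1\<close> one of \<open>y + x\<^sup>k\<close>,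
  \<open>y + x\<^sup>k + x\<close> lies in \<open>R\<close> but in neither \<open>D\<^sub>1\<close> nor \<open>D\<^sub>2\<close>, hence in some \<open>B\<^sub>i\<close>.
  With \<open>m\<close> closed rings, two of the first \<open>m + 1\<close> such elements fall into the same
  \<open>B\<^sub>j\<close>; their difference \<open>x\<^sup>l - x\<^sup>k + d x\<close> with \<open>d \<in> {-1, 0, 1}\<close> then exhibits \<open>x\<close>
  as integral over \<open>B\<^sub>j\<close>, so \<open>x \<in> B\<^sub>j\<close>, a contradiction. Hence \<open>R \<subseteq> D\<^sub>1\<close> whenever
  \<open>R \<not>\<subseteq> D\<^sub>2 \<union> \<Union>B\<^sub>i\<close>, and induction on the number of closed rings handles the
  remaining case.
\<close>

lemma subring_0: "subring A \<Longrightarrow> 0 \<in> A"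
  and subring_1: "subring A \<Longrightarrow> 1 \<in> A"
  and subring_add: "subring A \<Longrightarrow> x \<in> A \<Longrightarrow> y \<in> A \<Longrightarrow> x + y \<in> A"
  and subring_diff: "subring A \<Longrightarrow> x \<in> A \<Longrightarrow> y \<in> A \<Longrightarrow> x - y \<in> A"
  and subring_mult: "subring A \<Longrightarrow> x \<in> A \<Longrightarrow> y \<in> A \<Longrightarrow> x * y \<in> A"
  by (auto simp: subring_def)

lemma subring_pow: "subring A \<Longrightarrow> x \<in> A \<Longrightarrow> x ^ k \<in> A"
  by (induction k) (auto intro: subring_1 subring_mult)

lemma subring_add_notin_right:
  assumes "subring A" "x \<in> A" "y \<notin> A"
  shows "x + y \<notin> A"
  using subring_diff[OF assms(1) _ assms(2), of "x + y"] assms(3) by auto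

lemma subring_notin_or_add_notin:
  assumes "subring A" "x \<notin> A"
  shows "y \<notin> A \<or> y + x \<notin> A"
  using subring_diff[OF assms(1), of "y + x" y] assms(2) by auto

lemma coeff_monom_in_subring: "subring B \<Longrightarrow> a \<in> B \<Longrightarrow> coeff (monom a m) i \<in> B"
  by (simp add: subring_0)

lemma integral_over_of_monic_relation:
  fixes x :: "'a::comm_ring_1"
  assumes B: "subring B" and coeffs: "\<forall>i. coeff q i \<in> B"
    and deg: "degree q < l" and rel: "x ^ l = poly q x"
  shows "integral_over B x"
proof -
  define p where "p = monom 1 l - q"
  have "lead_coeff p = 1"
  proof (cases "(1::'a) = 0")
    case True
    then show ?thesis by (metis mult_1 mult_zero_left)
  next
    case False
    then have "degree (monom (1::'a) l) = l"
      by (simp add: degree_monom_eq)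
    moreover have "p = - q + monom 1 l"
      by (simp add: p_def)
    ultimately show ?thesis
      using lead_coeff_add_le[of "- q" "monom 1 l"] deg by simp
  qed
  moreover have "coeff p i \<in> B" for i
    unfolding p_def coeff_diff
    using coeffs coeff_monom_in_subring[OF B subring_1[OF B]] by (blast intro: subring_diff[OF B])
  moreover have "poly p x = 0"
    using rel by (simp add: p_def poly_monom)
  ultimately show ?thesis
    unfolding integral_over_def by blast
qed

lemma integral_over_of_power_difference:
  fixes x :: "'a::comm_ring_1"
  assumes B: "subring B" and c: "x ^ l - x ^ k + d * x \<in> B" and d: "d \<in> B"
    and "k < l" "1 < l"
  shows "integral_over B x"
proof (rule integral_over_of_monic_relation[OF B])
  let ?c = "x ^ l - x ^ k + d * x"
  let ?q = "monom 1 k - monom d 1 + monom ?c 0"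
  show "\<forall>i. coeff ?q i \<in> B"
    unfolding coeff_add coeff_diff
    using coeff_monom_in_subring[OF B] subring_1[OF B] c d
    by (blast intro: subring_add[OF B] subring_diff[OF B])
  show "degree ?q < l"
    using \<open>k < l\<close> \<open>1 < l\<close> degree_monom_le[of _ k] degree_monom_le[of _ 1]
    by (intro degree_add_less degree_diff_less) (auto simp: monom_0 intro: le_less_trans)
  show "x ^ l = poly ?q x"
    by (simp add: poly_monom)
qed

lemma shifted_powers_not_covered:
  fixes B :: "'i \<Rightarrow> 'a::comm_ring_1 set"
  assumes fin: "finite I" and closed: "\<forall>i\<in>I. subring (B i) \<and> integrally_closed (B i)"
    and x: "\<forall>i\<in>I. x \<notin> B i" and e: "\<forall>k. e k \<in> {0, 1}"
  shows "\<not> (\<forall>k\<in>{1..card I + 1}. y + x ^ k + e k * x \<in> (\<Union>i\<in>I. B i))"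
proof
  let ?K = "{1..card I + 1}"
  assume "\<forall>k\<in>?K. y + x ^ k + e k * x \<in> (\<Union>i\<in>I. B i)"
  then obtain f where f: "\<And>k. k \<in> ?K \<Longrightarrow> f k \<in> I \<and> y + x ^ k + e k * x \<in> B (f k)"
    using bchoice[of ?K "\<lambda>k i. i \<in> I \<and> y + x ^ k + e k * x \<in> B i"] by blast
  have "f ` ?K \<subseteq> I"
    using f by blast
  then have "card (f ` ?K) \<le> card I"
    by (rule card_mono[OF fin])
  then have "card (f ` ?K) < card ?K"
    by simp
  then have "\<not> inj_on f ?K"
    using pigeonhole by blast
  then obtain k l where kl: "k \<in> ?K" "l \<in> ?K" "k < l" "f k = f l"
    unfolding inj_on_def by (metis linorder_neqE_nat)
  define j where "j = f k"
  have j: "j \<in> I" "subring (B j)" "integrally_closed (B j)"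
    using f[OF kl(1)] closed by (auto simp: j_def)
  have "y + x ^ l + e l * x \<in> B j" "y + x ^ k + e k * x \<in> B j"
    using f[OF kl(1)] f[OF kl(2)] kl(4) by (simp_all add: j_def)
  then have "(y + x ^ l + e l * x) - (y + x ^ k + e k * x) \<in> B j"
    by (rule subring_diff[OF j(2)])
  then have "x ^ l - x ^ k + (e l - e k) * x \<in> B j"
    by (simp add: algebra_simps)
  moreover have "e m \<in> B j" for m
    using e[rule_format, of m] subring_0[OF j(2)] subring_1[OF j(2)] by auto
  then have "e l - e k \<in> B j"
    using subring_diff[OF j(2)] by blast
  ultimately have "integral_over (B j) x"
    using kl(1,3) by (intro integral_over_of_power_difference[where d = "e l - e k", OF j(2)]) auto
  then show False
    using j x by (auto simp: integrally_closed_def)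
qed

lemma subring_cover_step:
  fixes B :: "'i \<Rightarrow> 'a::comm_ring_1 set"
  assumes fin: "finite I" and closed: "\<forall>i\<in>I. subring (B i) \<and> integrally_closed (B i)"
    and D\<^sub>1: "subring D\<^sub>1" and D\<^sub>2: "subring D\<^sub>2" and R: "subring R"
    and cover: "R \<subseteq> D\<^sub>1 \<union> D\<^sub>2 \<union> (\<Union>i\<in>I. B i)"
    and not_cover: "\<not> R \<subseteq> D\<^sub>2 \<union> (\<Union>i\<in>I. B i)"
  shows "R \<subseteq> D\<^sub>1"
proof
  fix y assume "y \<in> R"
  from not_cover obtain x where x: "x \<in> R" "x \<notin> D\<^sub>2" "\<forall>i\<in>I. x \<notin> B i"
    by auto
  with cover have "x \<in> D\<^sub>1"
    by auto
  define e :: "nat \<Rightarrow> 'a" where "e k = (if y + x ^ k \<in> D\<^sub>2 then 1 else 0)" for k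
  show "y \<in> D\<^sub>1"
  proof (rule ccontr)
    assume "y \<notin> D\<^sub>1"
    have "y + x ^ k + e k * x \<in> (\<Union>i\<in>I. B i)" for k
    proof -
      have "x ^ k + e k * x \<in> D\<^sub>1"
        using \<open>x \<in> D\<^sub>1\<close>
        by (auto simp: e_def intro!: subring_add[OF D\<^sub>1] subring_pow[OF D\<^sub>1] subring_0[OF D\<^sub>1])
      then have "x ^ k + e k * x + y \<notin> D\<^sub>1"
        using subring_add_notin_right[OF D\<^sub>1 _ \<open>y \<notin> D\<^sub>1\<close>] by blast
      then have "y + x ^ k + e k * x \<notin> D\<^sub>1"
        by (simp add: ac_simps)
      moreover have "y + x ^ k + e k * x \<notin> D\<^sub>2"
        using subring_notin_or_add_notin[OF D\<^sub>2 \<open>x \<notin> D\<^sub>2\<close>, of "y + x ^ k"] by (auto simp: e_def)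
      moreover have "y + x ^ k + e k * x \<in> R"
        using \<open>y \<in> R\<close> x(1) by (auto simp: e_def intro!: subring_add[OF R] subring_pow[OF R])
      ultimately show ?thesis
        using cover by blast
    qed
    moreover have "\<forall>k. e k \<in> {0, 1}"
      by (simp add: e_def)
    ultimately show False
      using shifted_powers_not_covered[OF fin closed x(3), of e y] by blast
  qed
qed

theorem subring_cover_two_plus_integrally_closed:
  fixes B :: "'i \<Rightarrow> 'a::comm_ring_1 set"
  assumes "finite I" and "\<forall>i\<in>I. subring (B i) \<and> integrally_closed (B i)"
    and "subring D\<^sub>1" and "subring D\<^sub>2" and "subring R"
    and "R \<subseteq> D\<^sub>1 \<union> D\<^sub>2 \<union> (\<Union>i\<in>I. B i)"
  shows "R \<subseteq> D\<^sub>1 \<or> R \<subseteq> D\<^sub>2 \<or> (\<exists>i\<in>I. R \<subseteq> B i)"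
  using assms
proof (induction I arbitrary: D\<^sub>1 D\<^sub>2 rule: finite_induct)
  case empty
  show ?case
  proof (cases "R \<subseteq> D\<^sub>2")
    case False
    then have "R \<subseteq> D\<^sub>1"
      using subring_cover_step[OF finite.emptyI _ empty.prems(2-5)] by simp
    then show ?thesis ..
  qed simp
next
  case (insert a F)
  show ?case
  proof (cases "R \<subseteq> D\<^sub>2 \<union> (\<Union>i\<in>insert a F. B i)")
    case True
    then have "R \<subseteq> D\<^sub>2 \<union> B a \<union> (\<Union>i\<in>F. B i)"
      by auto
    then show ?thesis
      using insert.IH[of D\<^sub>2 "B a"] insert.prems by auto
  next
    case False
    have "finite (insert a F)"
      using insert.hyps(1) by simp
    then have "R \<subseteq> D\<^sub>1"
      using subring_cover_step[OF _ insert.prems False] by blast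
    then show ?thesis ..
  qed
qed

lemma card_le_2_subset_pair:
  assumes "finite A" "card A \<le> 2" "A \<subseteq> S" "S \<noteq> {}"
  shows "\<exists>a\<in>S. \<exists>b\<in>S. A \<subseteq> {a, b}"
proof -
  have "card A = 0 \<or> card A = 1 \<or> card A = 2"
    using assms(2) by linarith
  then show ?thesis
    using assms by (auto simp: card_1_singleton_iff card_2_iff)
qed

theorem mainTheorem2:
  fixes R :: "'a::comm_ring_1 set" and B :: "nat \<Rightarrow> 'a set" and n :: nat
  assumes "n > 1"
    and "subring R"
    and "\<forall>i\<in>{1..n}. subring (B i)"
    and "card {i\<in>{1..n}. \<not> integrally_closed (B i)} \<le> 2"
    and "R \<subseteq> (\<Union>i\<in>{1..n}. B i)"
  shows "\<exists>i\<in>{1..n}. R \<subseteq> B i"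
proof -
  have "\<exists>a\<in>{1..n}. \<exists>b\<in>{1..n}. {i\<in>{1..n}. \<not> integrally_closed (B i)} \<subseteq> {a, b}"
    by (rule card_le_2_subset_pair[OF _ assms(4)]) (use assms(1) in auto)
  then obtain a b where ab: "a \<in> {1..n}" "b \<in> {1..n}"
    and nonclosed: "{i\<in>{1..n}. \<not> integrally_closed (B i)} \<subseteq> {a, b}"
    by blast
  define I where "I = {1..n} - {a, b}"
  have "R \<subseteq> B a \<or> R \<subseteq> B b \<or> (\<exists>i\<in>I. R \<subseteq> B i)"
  proof (rule subring_cover_two_plus_integrally_closed)
    show "\<forall>i\<in>I. subring (B i) \<and> integrally_closed (B i)"
      using assms(3) nonclosed by (auto simp: I_def)
    show "R \<subseteq> B a \<union> B b \<union> (\<Union>i\<in>I. B i)"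
      using assms(5) by (auto simp: I_def)
  qed (use assms(2,3) ab in \<open>auto simp: I_def\<close>)
  then show ?thesis
    using ab by (auto simp: I_def)
qed

end
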